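(* Let $p$ be an odd prime, let $v$ be an integer with $1<v<p-1$, and let $g\in\{2,\dots,p-1\}$ be a primitive root modulo $p$. Define the sequence $\gamma_v=(\gamma_v(i))_{i=1}^{p-1}$ by $\gamma_v(i)=\big(g^{i-1}\,\%\,p\big)\,\%\,v$. Then $\gamma_v$, regarded as a periodic sequence of length $p-1$, has least period exactly $p-1$.
   Context: For integers $x$ and $m\ge 1$, $x\,\%\,m$ denotes the least nonnegative remainder of $x$ upon division by $m$ (so $g^{i-1}\,\%\,p\in\{1,\dots,p-1\}$ is read as an ordinary integer before reducing modulo $v$). A sequence $s$ of length $N$ is regarded as indexed cyclically (indices modulo $N$); its least period is the smallest integer $\rho>0$ with $s(i+\rho)=s(i)$ for all indices $i$ (indices taken modulo $N$). *)

theory Defs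
  imports "HOL-Number_Theory.Number_Theory"
begin

definition gamma_seq :: "nat \<Rightarrow> nat \<Rightarrow> nat \<Rightarrow> nat \<Rightarrow> nat" where
  "gamma_seq p g v i = (g ^ (i - 1) mod p) mod v"

text \<open>A sequence s indexed by 1..N, read cyclically (index i stands for ((i-1) mod N)+1).\<close>
definition cyc_at :: "nat \<Rightarrow> (nat \<Rightarrow> 'a) \<Rightarrow> nat \<Rightarrow> 'a" where
  "cyc_at N s i = s ((i - 1) mod N + 1)"

definition is_cyc_period :: "nat \<Rightarrow> (nat \<Rightarrow> 'a) \<Rightarrow> nat \<Rightarrow> bool" where
  "is_cyc_period N s r \<longleftrightarrow> r > 0 \<and> (\<forall>i\<in>{1..N}. cyc_at N s (i + r) = s i)"

definition least_cyc_period :: "nat \<Rightarrow> (nat \<Rightarrow> 'a) \<Rightarrow> nat" where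
  "least_cyc_period N s = (LEAST r. is_cyc_period N s r)"

end

theory Submission
  imports Defs
begin

text \<open>
  Suppose some r with 0 < r < p - 1 were a period, and put h = g^r mod p. Since g^(i-1) mod p runs
  through all of 1, ..., p - 1, multiplication by h modulo p would preserve every residue mod v on
  {1, ..., p - 1}, and h \<noteq> 1 because g has order p - 1. Taking y = 1 gives h \<equiv> 1 (mod v); taking
  the least y with h y \<ge> p, so that h y mod p = h y - p, gives h y - p \<equiv> y \<equiv> h y (mod v). Hence v
  divides p, which is impossible for 1 < v < p.
\<close>

lemma dvd_modulus_if_mult_mod_preserves_residues:
  fixes h n v :: nat
  assumes "2 \<le> h" "h < n"
    and preserves: "\<forall>y\<in>{0<..<n}. h * y mod n mod v = y mod v"
  shows "v dvd n"
proof -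
  define q where "q = (n - 1) div h"
  define y where "y = q + 1"
  have q_le: "h * q \<le> n - 1"
    unfolding q_def by (rule times_div_less_eq_dividend)
  have q_gt: "n - 1 < h * q + h"
    using mult_div_mod_eq[of h "n - 1"] mod_less_divisor[of h "n - 1"] \<open>2 \<le> h\<close>
    unfolding q_def by linarith
  have "2 * q \<le> h * q"
    using \<open>2 \<le> h\<close> by (rule mult_le_mono1)
  then have y_range: "y \<in> {0<..<n}"
    using q_le \<open>2 \<le> h\<close> \<open>h < n\<close> unfolding y_def greaterThanLessThan_iff by linarith
  have hy: "h * y = h * q + h"
    unfolding y_def by simp
  have ge: "n \<le> h * y" and less: "h * y - n < n"
    using hy q_le q_gt \<open>h < n\<close> by linarith+
  have "[h = 1] (mod v)"
    using bspec[OF preserves, of 1] \<open>2 \<le> h\<close> \<open>h < n\<close> by (simp add: cong_def)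
  then have hy_cong: "[h * y = y] (mod v)"
    using cong_scalar_right[of h 1 v y] by simp
  have "h * y mod n = h * y - n"
    using ge less by (simp add: le_mod_geq)
  then have "[h * y - n = y] (mod v)"
    using bspec[OF preserves y_range] by (simp add: cong_def)
  then have "[h * y = y + n] (mod v)"
    using ge by (metis cong_add_rcancel_nat le_add_diff_inverse2)
  then have "[y + n = y] (mod v)"
    using hy_cong by (metis cong_sym cong_trans)
  then show ?thesis
    by (simp add: cong_add_lcancel_0_nat cong_0_iff)
qed

lemma residue_primroot_powers_eq_totatives:
  assumes "n > 1" and "residue_primroot n g"
  shows "(\<lambda>k. g ^ k mod n) ` {..<totient n} = totatives n"
proof (rule card_subset_eq)
  have "coprime n g" and ord: "ord n g = totient n"
    using assms(2) by (simp_all add: residue_primroot_def)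
  then show "(\<lambda>k. g ^ k mod n) ` {..<totient n} \<subseteq> totatives n"
    using power_in_totatives[OF assms(1)] by blast
  have "inj_on (\<lambda>k. g ^ k mod n) {..<totient n}"
    using inj_power_mod[OF \<open>coprime n g\<close>] ord by simp
  then show "card ((\<lambda>k. g ^ k mod n) ` {..<totient n}) = card (totatives n)"
    by (simp add: card_image totient_def)
qed simp

lemma power_mod_ord_reduce:
  fixes n a k :: nat
  assumes "coprime n a"
  shows "a ^ (k mod ord n a) mod n = a ^ k mod n"
  using order_divides_expdiff[OF assms, of "k mod ord n a" k] by (simp add: cong_def)

lemma is_cyc_period_length: "N > 0 \<Longrightarrow> is_cyc_period N s N"
  by (auto simp: is_cyc_period_def cyc_at_def le_mod_geq)

lemma least_cyc_period_eq_length: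
  assumes "N > 0" and "\<And>r. is_cyc_period N s r \<Longrightarrow> N \<le> r"
  shows "least_cyc_period N s = N"
  unfolding least_cyc_period_def
  using assms by (intro Least_equality is_cyc_period_length)

lemma is_cyc_period_shift:
  assumes "is_cyc_period N s r" and "k < N"
  shows "s ((k + r) mod N + 1) = s (k + 1)"
proof -
  have "k + 1 \<in> {1..N}" using \<open>k < N\<close> by simp
  then have "cyc_at N s (k + 1 + r) = s (k + 1)"
    using assms(1) unfolding is_cyc_period_def by blast
  then show ?thesis by (simp add: cyc_at_def)
qed

lemma gamma_seq_period_preserves_residues:
  fixes p g v r :: nat
  assumes "prime p" and "ord p g = p - 1"
    and "is_cyc_period (p - 1) (gamma_seq p g v) r"
  shows "\<forall>y\<in>{0<..<p}. (g ^ r mod p) * y mod p mod v = y mod v"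
proof
  fix y assume "y \<in> {0<..<p}"
  have "p > 1" using \<open>prime p\<close> prime_gt_1_nat by blast
  have "ord p g > 0" using assms(2) \<open>p > 1\<close> by simp
  then have "coprime p g" by simp
  then have "residue_primroot p g"
    using assms(1,2) \<open>p > 1\<close> by (simp add: residue_primroot_def totient_prime)
  then have "y \<in> (\<lambda>k. g ^ k mod p) ` {..<p - 1}"
    using residue_primroot_powers_eq_totatives[OF \<open>p > 1\<close>] \<open>y \<in> {0<..<p}\<close>
    by (simp add: totatives_prime[OF \<open>prime p\<close>] totient_prime[OF \<open>prime p\<close>])
  then obtain k where k: "k < p - 1" "y = g ^ k mod p" by auto
  have "gamma_seq p g v ((k + r) mod (p - 1) + 1) = gamma_seq p g v (k + 1)"
    using is_cyc_period_shift[OF assms(3) k(1)] .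
  then have "g ^ (k + r) mod p mod v = y mod v"
    using power_mod_ord_reduce[OF \<open>coprime p g\<close>] assms(2) k(2) by (simp add: gamma_seq_def)
  moreover have "(g ^ r mod p) * y mod p = g ^ (k + r) mod p"
    unfolding k(2) by (metis mod_mult_eq power_add mult.commute)
  ultimately show "(g ^ r mod p) * y mod p mod v = y mod v"
    by simp
qed

theorem theorem7:
  fixes p g v :: nat
  assumes "prime p" and "odd p"
    and "1 < v" and "v < p - 1"
    and "g \<in> {2..p-1}" and "ord p g = p - 1"
  shows "least_cyc_period (p - 1) (gamma_seq p g v) = p - 1"
proof (rule least_cyc_period_eq_length)
  show "p - 1 > 0" using assms(3,4) by simp
  fix r assume period: "is_cyc_period (p - 1) (gamma_seq p g v) r"
  show "p - 1 \<le> r"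
  proof (rule ccontr)
    assume "\<not> p - 1 \<le> r"
    have "p > 1" "ord p g > 0"
      using assms(3,4,6) by simp_all
    then have "coprime p g" by simp
    have "g ^ r mod p \<in> {0<..<p}"
      using power_in_totatives[OF \<open>p > 1\<close> \<open>coprime p g\<close>] totatives_prime[OF assms(1)] by blast
    moreover have "g ^ r mod p \<noteq> 1"
    proof -
      have "r > 0" using period by (simp add: is_cyc_period_def)
      then have "\<not> [g ^ r = 1] (mod p)"
        using ord_minimal \<open>\<not> p - 1 \<le> r\<close> assms(6) by simp
      then show ?thesis using \<open>p > 1\<close> by (simp add: cong_def)
    qed
    ultimately have "2 \<le> g ^ r mod p" "g ^ r mod p < p" by auto
    then have "v dvd p"
      using gamma_seq_period_preserves_residues[OF assms(1,6) period]
      by (rule dvd_modulus_if_mult_mod_preserves_residues)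
    then show False
      using assms(1,3,4) prime_nat_iff by auto
  qed
qed

end
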